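(* Let $M$ be an algebraic number field of degree $m$ with ring of integers $\mathbb{Z}_M$ and integral basis $(1,\omega_2,\ldots,\omega_m)$. Let $\alpha$ be an algebraic integer over $M$ of degree $n$ over $M$, let $K=M(\alpha)$, and let $0\neq\mu\in\mathbb{Z}_M$. Define \[ c_{hji}=\tfrac12\left|\alpha^{(hj)}-\alpha^{(hi)}\right|\quad(1\le h\le m,\ 1\le i,j\le n,\ i\ne j), \qquad c_{hi}=\frac{|\mu^{(h)}|}{\prod_{1\le j\le n,\,j\ne i}c_{hji}}\quad(1\le h\le m,\ 1\le i\le n), \] \[ c_1=\max_{h,j,i}\frac{\sqrt[n]{|\mu^{(h)}|}}{c_{hji}}\ \ (\text{max over }1\le h\le m,\ 1\le i,j\le n,\ i\ne j),\qquad c_3=\frac{\sqrt[n]{\overline{|\mu|}}}{\overline{|\alpha|}},\qquad c_4=\max(c_1,c_3), \] \[ c_5=2c_2\,\overline{|\alpha|},\qquad d_{hi}=c_{hi}\,c_5^{\,n-1}\quad(1\le h\le m,\ 1\le i\le n), \] where $c_2$ is the row norm of $S^{-1}$ (the maximum over the rows of $S^{-1}$ of the sum of absolute values of the entries in that row), $S$ being the $m\times m$ matrix whose $j$-th row is $(1,\omega_2^{(j)},\ldots,\omega_m^{(j)})$. Suppose $X,Y\in\mathbb{Z}_M$ satisfy $N_{K/M}(X-\alpha Y)=\mu$ and $\overline{|Y|}>c_4$. Write $X=x_1+\omega_2x_2+\cdots+\omega_mx_m$, $Y=y_1+\omega_2y_2+\cdots+\omega_my_m$ with $x_i,y_i\in\mathbb{Z}$,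 put $A=\max(\max_i|x_i|,\max_i|y_i|)$ and $\beta=X-\alpha Y$. Then there exist indices $h,i$ with $1\le h\le m$, $1\le i\le n$ such that \[ |\beta^{(hi)}|\le d_{hi}\,A^{1-n}. \]
   Context: Let $\sigma_1,\ldots,\sigma_m$ be the embeddings of $M$ into $\mathbb{C}$; for $\gamma\in M$ write $\gamma^{(j)}=\sigma_j(\gamma)$. Let $f(x)$ be the monic relative defining polynomial of $\alpha$ over $M$, and for $j=1,\ldots,m$ let $\alpha^{(j1)},\ldots,\alpha^{(jn)}$ be the roots of the polynomial obtained by applying $\sigma_j$ to the coefficients of $f$. For $\gamma\in K$, $\gamma^{(jk)}$ denotes the image of $\gamma$ under the embedding of $K$ into $\mathbb{C}$ extending $\sigma_j$ and sending $\alpha$ to $\alpha^{(jk)}$; thus $\beta^{(hi)}=X^{(h)}-\alpha^{(hi)}Y^{(h)}$. For an algebraic number $\gamma$, its size $\overline{|\gamma|}$ is the maximum of the absolute values of its conjugates; in particular $\overline{|\alpha|}=\max_{j,k}|\alpha^{(jk)}|$, $\overline{|Y|}=\max_j|Y^{(j)}|$, $\overline{|\mu|}=\max_j|\mu^{(j)}|$. It is assumed that the $\alpha^{(hj)}$, $1\le j\le n$, are pairwise distinct for each $h$ (as they are, $f$ being irreducible over $M$), so that all $c_{hji}>0$. *)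

theory Defs
  imports "HOL-Analysis.Analysis" "HOL-Computational_Algebra.Polynomial"
begin

definition subfield_C :: "complex set \<Rightarrow> bool" where
  "subfield_C M \<longleftrightarrow> 0 \<in> M \<and> 1 \<in> M \<and>
     (\<forall>a\<in>M. \<forall>b\<in>M. a + b \<in> M \<and> a - b \<in> M \<and> a * b \<in> M) \<and>
     (\<forall>a\<in>M. inverse a \<in> M)"

definition ring_of_integers :: "complex set \<Rightarrow> complex set" where
  "ring_of_integers M = {\<gamma> \<in> M. algebraic_int \<gamma>}"

definition integral_basis :: "complex set \<Rightarrow> nat \<Rightarrow> (nat \<Rightarrow> complex) \<Rightarrow> bool" where
  "integral_basis M m \<omega> \<longleftrightarrow>
     \<omega> 1 = 1 \<and>
     M = {(\<Sum>k=1..m. of_rat (q k) * \<omega> k) | q. True} \<and>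
     ring_of_integers M = {(\<Sum>k=1..m. of_int (x k) * \<omega> k) | x. True} \<and>
     (\<forall>q. (\<Sum>k=1..m. of_rat (q k) * \<omega> k) = 0 \<longrightarrow> (\<forall>k\<in>{1..m}. q k = 0))"

text \<open>Field embeddings of M into the complex numbers (behaviour outside M irrelevant).\<close>
definition field_emb :: "complex set \<Rightarrow> (complex \<Rightarrow> complex) \<Rightarrow> bool" where
  "field_emb M s \<longleftrightarrow> s 1 = 1 \<and>
     (\<forall>a\<in>M. \<forall>b\<in>M. s (a + b) = s a + s b \<and> s (a * b) = s a * s b)"

definition all_embeddings :: "complex set \<Rightarrow> nat \<Rightarrow> (nat \<Rightarrow> complex \<Rightarrow> complex) \<Rightarrow> bool" where
  "all_embeddings M m \<sigma> \<longleftrightarrow>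
     (\<forall>j\<in>{1..m}. field_emb M (\<sigma> j)) \<and>
     (\<forall>j\<in>{1..m}. \<forall>k\<in>{1..m}. j \<noteq> k \<longrightarrow> (\<exists>a\<in>M. \<sigma> j a \<noteq> \<sigma> k a)) \<and>
     (\<forall>s. field_emb M s \<longrightarrow> (\<exists>j\<in>{1..m}. \<forall>a\<in>M. s a = \<sigma> j a))"

definition poly_over :: "complex set \<Rightarrow> complex poly \<Rightarrow> bool" where
  "poly_over M p \<longleftrightarrow> (\<forall>i. coeff p i \<in> M)"

definition irreducible_over :: "complex set \<Rightarrow> complex poly \<Rightarrow> bool" where
  "irreducible_over M f \<longleftrightarrow> poly_over M f \<and> degree f \<ge> 1 \<and>
     (\<forall>g h. poly_over M g \<longrightarrow> poly_over M h \<longrightarrow> f = g * h \<longrightarrow> degree g = 0 \<or> degree h = 0)"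

text \<open>Relative norm N_{K/M}(X - alpha Y), where f is the minimal polynomial of alpha
  over M: the product of X - rho Y over the conjugates rho of alpha over M (roots of f,
  counted with multiplicity).\<close>
definition rel_norm_lin :: "complex poly \<Rightarrow> complex \<Rightarrow> complex \<Rightarrow> complex" where
  "rel_norm_lin f X Y = (\<Prod>\<rho>\<in>{\<rho>. poly f \<rho> = 0}. (X - \<rho> * Y) ^ order \<rho> f)"

definition house_M :: "nat \<Rightarrow> (nat \<Rightarrow> complex \<Rightarrow> complex) \<Rightarrow> complex \<Rightarrow> real" where
  "house_M m \<sigma> \<gamma> = Max ((\<lambda>j. cmod (\<sigma> j \<gamma>)) ` {1..m})"

end

(*
  Write |Y| and |\<alpha>| for houses, and let \<beta> = X - \<alpha> Y. In an embedding h with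
  |Y^(h)| = |Y|, take the conjugate \<beta>^(hi) = X^(h) - \<alpha>^(hi) Y^(h) of least modulus. The
  triangle inequality gives |\<beta>^(hj)| \<ge> c_hji |Y^(h)| for every other j, so the norm
  equation |\<mu>^(h)| = \<Prod>_j |\<beta>^(hj)| yields |\<beta>^(hi)| \<le> c_hi |Y^(h)|^(1-n).
  To replace |Y^(h)| by A, recover the coordinates of X and Y from their conjugates through
  S^(-1): in each embedding some factor of \<mu> is at most |\<mu>|^(1/n) < |\<alpha>| |Y|, hence
  |X^(j)| \<le> 2 |\<alpha>| |Y|, and A \<le> c_5 |Y| as soon as |\<alpha>| \<ge> 1 (for n = 1 nothing is needed,
  as A enters with exponent n - 1). And |\<alpha>| \<ge> 1 holds for n \<ge> 2:
  otherwise write \<alpha>^N as a polynomial of degree < n over M whose coefficients have a fixed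
  denominator; by Lagrange interpolation at the conjugates of \<alpha> these coefficients are
  integers of M all of whose conjugates tend to 0, so they vanish for large N, forcing
  \<alpha> = 0 against the irreducibility of f.
*)

theory Submission
  imports Defs "HOL-Computational_Algebra.Fundamental_Theorem_Algebra"
begin

section \<open>Subfields of the complex numbers and polynomials over them\<close>

lemma irreducible_overD:
  assumes "irreducible_over M f"
  shows "poly_over M f" and "degree f \<ge> 1" and "f \<noteq> 0"
    and "\<And>g h. poly_over M g \<Longrightarrow> poly_over M h \<Longrightarrow> f = g * h \<Longrightarrow> degree g = 0 \<or> degree h = 0"
  using assms unfolding irreducible_over_def by auto

locale complex_subfield =
  fixes M :: "complex set"
  assumes subfield: "subfield_C M"
begin

lemma zero_mem: "0 \<in> M" and one_mem: "1 \<in> M"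
  and add_mem: "a \<in> M \<Longrightarrow> b \<in> M \<Longrightarrow> a + b \<in> M"
  and diff_mem: "a \<in> M \<Longrightarrow> b \<in> M \<Longrightarrow> a - b \<in> M"
  and mult_mem: "a \<in> M \<Longrightarrow> b \<in> M \<Longrightarrow> a * b \<in> M"
  and inverse_mem: "a \<in> M \<Longrightarrow> inverse a \<in> M"
  using subfield unfolding subfield_C_def by auto

lemma uminus_mem: "a \<in> M \<Longrightarrow> - a \<in> M"
  using diff_mem[OF zero_mem] by fastforce

lemma of_nat_mem: "of_nat k \<in> M"
  by (induction k) (auto simp: zero_mem one_mem add_mem)

lemma of_int_mem: "of_int z \<in> M"
  by (cases z rule: int_cases) (auto simp: of_nat_mem uminus_mem simp del: of_nat_Suc)

lemma Ints_subset: "\<int> \<subseteq> M"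
  by (auto elim!: Ints_cases simp: of_int_mem)

lemma sum_mem: "(\<And>x. x \<in> A \<Longrightarrow> g x \<in> M) \<Longrightarrow> sum g A \<in> M"
  by (induction A rule: infinite_finite_induct) (auto simp: zero_mem add_mem)

lemma power_mem: "a \<in> M \<Longrightarrow> a ^ k \<in> M"
  by (induction k) (auto simp: one_mem mult_mem)

lemma poly_over_0: "poly_over M 0"
  by (simp add: poly_over_def zero_mem)

lemma poly_over_1: "poly_over M 1"
  by (auto simp: poly_over_def zero_mem one_mem coeff_1)

lemma poly_over_monom: "c \<in> M \<Longrightarrow> poly_over M (monom c k)"
  by (auto simp: poly_over_def zero_mem coeff_monom)

lemma poly_over_add: "poly_over M p \<Longrightarrow> poly_over M q \<Longrightarrow> poly_over M (p + q)"
  by (auto simp: poly_over_def add_mem)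

lemma poly_over_diff: "poly_over M p \<Longrightarrow> poly_over M q \<Longrightarrow> poly_over M (p - q)"
  by (auto simp: poly_over_def diff_mem)

lemma poly_over_mult: "poly_over M p \<Longrightarrow> poly_over M q \<Longrightarrow> poly_over M (p * q)"
  unfolding poly_over_def coeff_mult by (auto intro!: sum_mem mult_mem)

lemma poly_over_smult: "c \<in> M \<Longrightarrow> poly_over M p \<Longrightarrow> poly_over M (smult c p)"
  by (auto simp: poly_over_def mult_mem)

lemma poly_over_sum: "(\<And>x. x \<in> A \<Longrightarrow> poly_over M (g x)) \<Longrightarrow> poly_over M (sum g A)"
  by (induction A rule: infinite_finite_induct) (auto simp: poly_over_0 poly_over_add)

lemma poly_over_pderiv: "poly_over M p \<Longrightarrow> poly_over M (pderiv p)"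
  unfolding poly_over_def coeff_pderiv
  by (metis mult_mem of_nat_mem)

lemma poly_over_divide:
  assumes q: "poly_over M q" "q \<noteq> 0"
  shows "poly_over M p \<Longrightarrow>
    \<exists>d r. poly_over M d \<and> poly_over M r \<and> p = d * q + r \<and> (r = 0 \<or> degree r < degree q)"
proof (induction "degree p" arbitrary: p rule: less_induct)
  case (less p)
  show ?case
  proof (cases "p = 0 \<or> degree p < degree q")
    case True
    then show ?thesis using less.prems poly_over_0 by (intro exI[of _ 0] exI[of _ p]) auto
  next
    case False
    then have p0: "p \<noteq> 0" and dg: "degree q \<le> degree p" by auto
    define c where "c = lead_coeff p / lead_coeff q"
    define t where "t = monom c (degree p - degree q)"
    have c0: "c \<noteq> 0" using p0 q by (simp add: c_def)
    have t: "poly_over M t"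
      unfolding t_def c_def divide_inverse poly_over_def[symmetric]
      using less.prems q by (intro poly_over_monom mult_mem inverse_mem) (auto simp: poly_over_def)
    have deg_tq: "degree (t * q) = degree p"
      using c0 q dg by (simp add: degree_mult_eq t_def degree_monom_eq)
    have lead_tq: "coeff (t * q) (degree p) = lead_coeff p"
      using coeff_mult_degree_sum[of t q] c0 q dg by (simp add: t_def degree_monom_eq c_def)
    define p' where "p' = p - t * q"
    have p': "poly_over M p'" unfolding p'_def using less.prems t q by (intro poly_over_diff poly_over_mult)
    have "p' = 0 \<or> degree p' < degree p"
    proof (rule ccontr)
      assume "\<not> ?thesis"
      moreover have "degree p' \<le> degree p" unfolding p'_def using deg_tq by (metis degree_diff_le le_refl)
      moreover have "coeff p' (degree p) = 0" unfolding p'_def using lead_tq by simp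
      ultimately show False by (metis le_antisym leading_coeff_0_iff not_le)
    qed
    then obtain d r where "poly_over M d" "poly_over M r" "p' = d * q + r" "r = 0 \<or> degree r < degree q"
      using less.hyps[OF _ p'] poly_over_0 p' q by (metis add.right_neutral mult_zero_left degree_0 neq0_conv)
    moreover have "p = (d + t) * q + r" using \<open>p' = d * q + r\<close> unfolding p'_def by (simp add: algebra_simps)
    ultimately show ?thesis using poly_over_add t by blast
  qed
qed

text \<open>A nonzero combination \<open>u = a f + b p\<close> of least degree divides both \<open>f\<close> and \<open>p\<close>, since the
  remainders of \<open>f\<close> and \<open>p\<close> modulo \<open>u\<close> are again such combinations.\<close>
lemma poly_over_bezout:
  assumes f: "poly_over M f" "f \<noteq> 0" and p: "poly_over M p"
  obtains a b u where "poly_over M a" "poly_over M b" "u = a * f + b * p" "u \<noteq> 0"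
    "\<And>v. v \<in> {f, p} \<Longrightarrow> \<exists>d. poly_over M d \<and> v = d * u"
proof -
  define I where "I = {a * f + b * p | a b. poly_over M a \<and> poly_over M b}"
  have I_closed: "a * u + b * v \<in> I"
    if uv: "u \<in> I" "v \<in> I" and ab: "poly_over M a" "poly_over M b" for a b u v
  proof -
    obtain a1 b1 a2 b2 where "poly_over M a1" "poly_over M b1" "u = a1 * f + b1 * p"
      "poly_over M a2" "poly_over M b2" "v = a2 * f + b2 * p"
      using uv unfolding I_def by blast
    then have "a * u + b * v = (a * a1 + b * a2) * f + (a * b1 + b * b2) * p"
      "poly_over M (a * a1 + b * a2)" "poly_over M (a * b1 + b * b2)"
      using ab by (auto simp: algebra_simps intro!: poly_over_add poly_over_mult)
    then show ?thesis unfolding I_def by blast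
  qed
  have fI: "f \<in> I" and pI: "p \<in> I"
    unfolding I_def using poly_over_0 poly_over_1 by force+
  obtain u where u: "u \<in> I" "u \<noteq> 0" and u_min: "\<And>v. v \<in> I \<Longrightarrow> v \<noteq> 0 \<Longrightarrow> degree u \<le> degree v"
    using ex_has_least_nat[of "\<lambda>v. v \<in> I \<and> v \<noteq> 0" f degree] fI f(2) by auto
  obtain a b where ab: "poly_over M a" "poly_over M b" "u = a * f + b * p"
    using u(1) unfolding I_def by blast
  have uM: "poly_over M u" using ab f(1) p by (auto intro: poly_over_add poly_over_mult)
  have "\<exists>d. poly_over M d \<and> v = d * u" if v: "v \<in> I" "poly_over M v" for v
  proof -
    obtain d r where dr: "poly_over M d" "poly_over M r" "v = d * u + r" "r = 0 \<or> degree r < degree u"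
      using poly_over_divide[OF uM u(2) v(2)] by blast
    have "poly_over M (- d)" using dr(1) by (simp add: poly_over_def uminus_mem)
    then have "1 * v + (- d) * u \<in> I" by (rule I_closed[OF v(1) u(1) poly_over_1])
    then have "r \<in> I" using dr(3) by simp
    then have "r = 0" using dr(4) u_min by fastforce
    then show ?thesis using dr by auto
  qed
  then show ?thesis using that[OF ab u(2)] fI pI f(1) p by blast
qed

lemma irreducible_over_coprime:
  assumes irr: "irreducible_over M f" and p: "poly_over M p" and not_dvd: "\<not> f dvd p"
  obtains a b where "poly_over M a" "poly_over M b" "a * f + b * p = 1"
proof -
  note f = irreducible_overD(1,3)[OF irr]
  obtain a0 b0 u where ab0: "poly_over M a0" "poly_over M b0" "u = a0 * f + b0 * p" and "u \<noteq> 0"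
    and u_dvd: "\<And>v. v \<in> {f, p} \<Longrightarrow> \<exists>d. poly_over M d \<and> v = d * u"
    by (rule poly_over_bezout[OF f p]) blast
  have uM: "poly_over M u" using ab0 f(1) p by (auto intro: poly_over_add poly_over_mult)
  have "\<exists>d. poly_over M d \<and> f = d * u" "\<exists>d. poly_over M d \<and> p = d * u" by (rule u_dvd, simp)+
  then obtain d d' where d: "poly_over M d" "f = d * u" and d': "p = d' * u" by blast
  have "degree d = 0 \<or> degree u = 0" using irreducible_overD(4)[OF irr d(1) uM d(2)] .
  then show ?thesis
  proof
    assume "degree d = 0"
    then obtain c where "d = [:c:]" by (rule degree_eq_zeroE)
    then have "f = smult c u" using d(2) by simp
    then have "u = smult (inverse c) f" using f(2) by auto
    then have "f dvd u" by (simp add: dvd_smult)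
    then have "f dvd p" using d' by (simp add: dvd_mult)
    then show ?thesis using not_dvd by contradiction
  next
    assume "degree u = 0"
    then obtain e where e: "u = [:e:]" by (rule degree_eq_zeroE)
    then have e0: "e \<noteq> 0" and "inverse e \<in> M"
      using \<open>u \<noteq> 0\<close> uM by (auto simp: poly_over_def inverse_mem dest: spec[of _ 0])
    have "smult (inverse e) a0 * f + smult (inverse e) b0 * p = smult (inverse e) u"
      using ab0(3) by (simp add: smult_add_right)
    also have "\<dots> = 1" using e e0 by (simp add: one_pCons)
    finally show ?thesis using that ab0(1,2) poly_over_smult[OF \<open>inverse e \<in> M\<close>] by blast
  qed
qed

lemma irreducible_over_dvd_of_root:
  assumes "irreducible_over M f" "poly_over M p" "poly f a = 0" "poly p a = 0"
  shows "f dvd p"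
proof (rule ccontr)
  assume "\<not> f dvd p"
  then obtain u v where "u * f + v * p = 1" using irreducible_over_coprime assms(1,2) by metis
  then have "poly (u * f + v * p) a = 1" by simp
  then show False using assms(3,4) by simp
qed

lemma irreducible_over_quotient:
  assumes irr: "irreducible_over M f" and p: "poly_over M p" and "poly f a = 0" "poly p a = 0"
  obtains d where "poly_over M d" "p = d * f"
proof -
  note f = irreducible_overD(1,3)[OF irr]
  obtain d r where dr: "poly_over M d" "poly_over M r" "p = d * f + r" "r = 0 \<or> degree r < degree f"
    using poly_over_divide[OF f p] by blast
  have "poly r a = 0" using dr(3) assms(3,4) by (simp add: algebra_simps)
  then have "r = 0"
    using irreducible_over_dvd_of_root[OF irr dr(2) assms(3)] dr(4) by (metis dvd_imp_degree_le not_le)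
  then show ?thesis using that dr by simp
qed

lemma irreducible_over_root_nonzero:
  assumes irr: "irreducible_over M f" and deg: "degree f \<ge> 2" and root: "poly f a = 0"
  shows "a \<noteq> 0"
proof
  assume "a = 0"
  then have "[:0, 1:] dvd f" using root poly_eq_0_iff_dvd[of f 0] by simp
  then obtain t where t: "f = [:0, 1:] * t" by (rule dvdE)
  then have "f = pCons 0 t" by simp
  then have "coeff t i = coeff f (Suc i)" "degree f = Suc (degree t)" for i
    using deg by (auto simp: degree_pCons_eq_if split: if_splits)
  then have "poly_over M t" "degree t \<noteq> 0"
    using irreducible_overD(1)[OF irr] deg by (auto simp: poly_over_def)
  moreover have "poly_over M [:0, 1:]" using poly_over_monom[OF one_mem, of 1] by (simp add: monom_altdef)
  ultimately show False using irreducible_overD(4)[OF irr _ _ t] by simp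
qed

end

section \<open>Embeddings of a subfield\<close>

locale subfield_embedding = complex_subfield M for M +
  fixes s :: "complex \<Rightarrow> complex"
  assumes embedding: "field_emb M s"
begin

lemma emb_one: "s 1 = 1"
  and emb_add: "a \<in> M \<Longrightarrow> b \<in> M \<Longrightarrow> s (a + b) = s a + s b"
  and emb_mult: "a \<in> M \<Longrightarrow> b \<in> M \<Longrightarrow> s (a * b) = s a * s b"
  using embedding unfolding field_emb_def by auto

lemma emb_zero: "s 0 = 0"
  using emb_add[OF zero_mem zero_mem] by simp

lemma emb_uminus: "a \<in> M \<Longrightarrow> s (- a) = - s a"
  using emb_add[OF uminus_mem, of a a] emb_zero by (simp add: eq_neg_iff_add_eq_0)

lemma emb_diff: "a \<in> M \<Longrightarrow> b \<in> M \<Longrightarrow> s (a - b) = s a - s b"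
  using emb_add[OF _ uminus_mem, of a b] emb_uminus[of b] by simp

lemma emb_of_nat: "s (of_nat k) = of_nat k"
  by (induction k) (simp_all add: emb_zero emb_one emb_add one_mem of_nat_mem)

lemma emb_of_int: "s (of_int z) = of_int z"
  by (cases z rule: int_cases) (auto simp: emb_of_nat emb_uminus of_nat_mem simp del: of_nat_Suc)

lemma emb_sum: "(\<And>x. x \<in> A \<Longrightarrow> g x \<in> M) \<Longrightarrow> s (sum g A) = (\<Sum>x\<in>A. s (g x))"
  by (induction A rule: infinite_finite_induct) (auto simp: emb_zero emb_add sum_mem)

lemma emb_power: "a \<in> M \<Longrightarrow> s (a ^ k) = s a ^ k"
  by (induction k) (auto simp: emb_one emb_mult power_mem)

lemma emb_nonzero: "a \<in> M \<Longrightarrow> a \<noteq> 0 \<Longrightarrow> s a \<noteq> 0"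
  using emb_mult[OF _ inverse_mem, of a] emb_one by force

lemma coeff_map_emb: "coeff (map_poly s p) i = s (coeff p i)"
  by (simp add: coeff_map_poly emb_zero)

lemma map_emb_diff: "poly_over M p \<Longrightarrow> poly_over M q \<Longrightarrow> map_poly s (p - q) = map_poly s p - map_poly s q"
  by (rule poly_eqI) (simp add: coeff_map_emb emb_diff poly_over_def)

lemma map_emb_add: "poly_over M p \<Longrightarrow> poly_over M q \<Longrightarrow> map_poly s (p + q) = map_poly s p + map_poly s q"
  by (rule poly_eqI) (simp add: coeff_map_emb emb_add poly_over_def)

lemma map_emb_mult:
  assumes p: "poly_over M p" and q: "poly_over M q"
  shows "map_poly s (p * q) = map_poly s p * map_poly s q"
proof (rule poly_eqI)
  fix k
  have "s (\<Sum>i\<le>k. coeff p i * coeff q (k - i)) = (\<Sum>i\<le>k. s (coeff p i) * s (coeff q (k - i)))"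
    using p q by (simp add: emb_sum emb_mult mult_mem poly_over_def)
  then show "coeff (map_poly s (p * q)) k = coeff (map_poly s p * map_poly s q) k"
    by (simp add: coeff_map_emb coeff_mult)
qed

lemma map_emb_monom: "map_poly s (monom c k) = monom (s c) k"
  by (rule poly_eqI) (simp add: coeff_map_emb coeff_monom emb_zero)

lemma map_emb_pderiv: "poly_over M p \<Longrightarrow> map_poly s (pderiv p) = pderiv (map_poly s p)"
  by (rule poly_eqI)
    (simp add: coeff_map_emb coeff_pderiv emb_mult of_nat_mem emb_of_nat poly_over_def del: of_nat_Suc)

text \<open>An irreducible polynomial is separable: it is coprime to its derivative, and this
  Bezout relation survives the embedding.\<close>
lemma conjugates_distinct:
  fixes r :: "nat \<Rightarrow> complex"
  assumes irr: "irreducible_over M f" and split: "map_poly s f = (\<Prod>k=1..n. [:- r k, 1:])"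
    and ij: "i \<in> {1..n}" "j \<in> {1..n}" "i \<noteq> j"
  shows "r i \<noteq> r j"
proof
  assume eq: "r i = r j"
  note f = irreducible_overD(1,2)[OF irr]
  have f': "poly_over M (pderiv f)" using poly_over_pderiv[OF f(1)] .
  have "\<not> f dvd pderiv f"
    using f(2) dvd_imp_degree_le[of f "pderiv f"] by (auto simp: degree_pderiv pderiv_eq_0_iff)
  then obtain a b where ab: "poly_over M a" "poly_over M b" "a * f + b * pderiv f = 1"
    using irreducible_over_coprime[OF irr f'] by metis
  have "map_poly s (a * f + b * pderiv f) = map_poly s 1" using ab(3) by simp
  then have bezout: "map_poly s a * map_poly s f + map_poly s b * pderiv (map_poly s f) = 1"
    using ab(1,2) f f' by (simp add: map_emb_add map_emb_mult map_emb_pderiv poly_over_mult emb_one)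
  have "map_poly s f = [:- r i, 1:] * (\<Prod>k\<in>{1..n} - {i}. [:- r k, 1:])"
    unfolding split using ij by (subst prod.remove[of _ i]) auto
  also have "(\<Prod>k\<in>{1..n} - {i}. [:- r k, 1:]) = [:- r i, 1:] * (\<Prod>k\<in>{1..n} - {i} - {j}. [:- r k, 1:])"
    using ij eq by (subst prod.remove[of _ j]) auto
  finally have split_twice: "map_poly s f = [:- r i, 1:] * ([:- r i, 1:] * (\<Prod>k\<in>{1..n} - {i} - {j}. [:- r k, 1:]))" .
  have double_root: "poly (L * (L * T)) z = 0" "poly (pderiv (L * (L * T))) z = 0"
    if "poly L z = 0" for L T :: "complex poly" and z
    using that by (simp_all add: pderiv_mult)
  have "poly (map_poly s f) (r i) = 0" "poly (pderiv (map_poly s f)) (r i) = 0"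
    unfolding split_twice by (rule double_root, simp)+
  then show False using arg_cong[OF bezout, of "\<lambda>p. poly p (r i)"] by simp
qed

lemma conjugate_root:
  fixes r :: "nat \<Rightarrow> complex"
  assumes irr: "irreducible_over M f" and split: "map_poly s f = (\<Prod>k=1..n. [:- r k, 1:])"
    and p: "poly_over M p" and "poly f a = 0" "poly p a = 0" and k: "k \<in> {1..n}"
  shows "poly (map_poly s p) (r k) = 0"
proof -
  obtain d where "poly_over M d" "p = d * f"
    using irreducible_over_quotient[OF irr p assms(4,5)] by blast
  moreover have "poly (map_poly s f) (r k) = 0"
    unfolding split poly_prod using k by (intro prod_zero) auto
  ultimately show ?thesis using irreducible_overD(1)[OF irr] by (simp add: map_emb_mult)
qed

end

section \<open>Estimates for products of linear forms\<close>

lemma exists_min_index: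
  fixes g :: "nat \<Rightarrow> real"
  assumes "n \<ge> 1"
  obtains i where "i \<in> {1..n}" "\<And>k. k \<in> {1..n} \<Longrightarrow> g i \<le> g k"
  using arg_min_if_finite(1)[of "{1..n}" g] arg_min_least[of "{1..n}" _ g] assms by force

lemma exists_factor_le_root:
  fixes \<beta> :: "nat \<Rightarrow> complex"
  assumes "n \<ge> 1"
  obtains k where "k \<in> {1..n}" "cmod (\<beta> k) \<le> root n (cmod (\<Prod>k=1..n. \<beta> k))"
proof -
  obtain k where k: "k \<in> {1..n}" "\<And>j. j \<in> {1..n} \<Longrightarrow> cmod (\<beta> k) \<le> cmod (\<beta> j)"
    using exists_min_index[OF assms, of "\<lambda>k. cmod (\<beta> k)"] by metis
  have "cmod (\<beta> k) ^ n = (\<Prod>j=1..n. cmod (\<beta> k))" by simp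
  also have "\<dots> \<le> (\<Prod>j=1..n. cmod (\<beta> j))" using k(2) by (intro prod_mono) auto
  also have "\<dots> = cmod (\<Prod>j=1..n. \<beta> j)" by (simp add: prod_norm)
  finally have "root n (cmod (\<beta> k) ^ n) \<le> root n (cmod (\<Prod>j=1..n. \<beta> j))"
    using assms by simp
  then show ?thesis using that k(1) assms by (simp add: real_root_power_cancel)
qed

lemma smallest_linear_factor_bound:
  fixes r :: "nat \<Rightarrow> complex" and a b :: complex
  assumes n: "n \<ge> 1" and distinct: "inj_on r {1..n}" and b: "b \<noteq> 0"
  obtains i where "i \<in> {1..n}"
    "cmod (a - r i * b) \<le>
       cmod (\<Prod>k=1..n. a - r k * b) / (\<Prod>j\<in>{1..n} - {i}. cmod (r j - r i) / 2) / cmod b ^ (n - 1)"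
proof -
  define \<beta> where "\<beta> k = a - r k * b" for k
  obtain i where i: "i \<in> {1..n}" "\<And>k. k \<in> {1..n} \<Longrightarrow> cmod (\<beta> i) \<le> cmod (\<beta> k)"
    using exists_min_index[OF n, of "\<lambda>k. cmod (\<beta> k)"] by metis
  define c where "c j = cmod (r j - r i) / 2" for j
  have lower: "c j * cmod b \<le> cmod (\<beta> j)" if "j \<in> {1..n}" for j
  proof -
    have "\<beta> j - \<beta> i = (r i - r j) * b" by (simp add: \<beta>_def algebra_simps)
    then have "2 * c j * cmod b = cmod (\<beta> j - \<beta> i)"
      by (simp add: c_def norm_mult norm_minus_commute)
    also have "\<dots> \<le> cmod (\<beta> j) + cmod (\<beta> i)" by (rule norm_triangle_ineq4)
    finally show ?thesis using i(2)[OF that] by simp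
  qed
  have c_pos: "c j > 0" if "j \<in> {1..n} - {i}" for j
  proof -
    have "r j \<noteq> r i" using that i(1) distinct unfolding inj_on_def by blast
    then show ?thesis by (simp add: c_def)
  qed
  have "cmod (\<beta> i) * ((\<Prod>j\<in>{1..n} - {i}. c j) * cmod b ^ (n - 1))
      = cmod (\<beta> i) * (\<Prod>j\<in>{1..n} - {i}. c j * cmod b)"
    using i(1) by (simp add: prod.distrib)
  also have "\<dots> \<le> cmod (\<beta> i) * (\<Prod>j\<in>{1..n} - {i}. cmod (\<beta> j))"
    using lower by (intro mult_left_mono prod_mono) (auto simp: c_def)
  also have "\<dots> = (\<Prod>k=1..n. cmod (\<beta> k))"
    using prod.remove[of "{1..n}" i "\<lambda>k. cmod (\<beta> k)"] i(1) by simp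
  also have "\<dots> = cmod (\<Prod>k=1..n. \<beta> k)" by (simp add: prod_norm)
  finally have le: "cmod (\<beta> i) * ((\<Prod>j\<in>{1..n} - {i}. c j) * cmod b ^ (n - 1)) \<le> cmod (\<Prod>k=1..n. \<beta> k)" .
  have "(\<Prod>j\<in>{1..n} - {i}. c j) * cmod b ^ (n - 1) > 0"
    using c_pos b by (intro mult_pos_pos prod_pos) auto
  then have "cmod (\<beta> i) \<le> cmod (\<Prod>k=1..n. \<beta> k) / ((\<Prod>j\<in>{1..n} - {i}. c j) * cmod b ^ (n - 1))"
    using le by (simp add: pos_le_divide_eq)
  then show ?thesis using that i(1) unfolding \<beta>_def c_def divide_divide_eq_left by blast
qed

lemma homogenized_poly_eval:
  fixes p :: "complex poly"
  assumes b: "b \<noteq> 0" and "degree p \<le> n"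
  shows "(\<Sum>i\<le>n. coeff p i * a ^ i * b ^ (n - i)) = b ^ n * poly p (a / b)"
proof -
  have "b ^ n * poly p (a / b) = (\<Sum>i\<le>n. coeff p i * (b ^ n * (a / b) ^ i))"
    unfolding poly_altdef sum_distrib_left using assms(2)
    by (subst sum.mono_neutral_left[of "{..n}"]) (auto simp: coeff_eq_0 mult_ac)
  also have "\<dots> = (\<Sum>i\<le>n. coeff p i * a ^ i * b ^ (n - i))"
  proof (rule sum.cong[OF refl])
    fix i assume "i \<in> {..n}"
    then have "b ^ n = b ^ i * b ^ (n - i)" by (simp flip: power_add)
    then show "coeff p i * (b ^ n * (a / b) ^ i) = coeff p i * a ^ i * b ^ (n - i)"
      using b by (simp add: power_divide)
  qed
  finally show ?thesis by simp
qed

lemma homogenized_prod_linear: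
  fixes r :: "nat \<Rightarrow> complex"
  assumes "b \<noteq> 0"
  shows "b ^ n * poly (\<Prod>k=1..n. [:- r k, 1:]) (a / b) = (\<Prod>k=1..n. a - r k * b)"
proof -
  have "b ^ n * poly (\<Prod>k=1..n. [:- r k, 1:]) (a / b) = (\<Prod>k=1..n. b * (a / b - r k))"
    by (simp add: poly_prod prod.distrib)
  also have "\<dots> = (\<Prod>k=1..n. a - r k * b)"
    using assms by (simp add: right_diff_distrib mult.commute)
  finally show ?thesis .
qed

lemma rel_norm_lin_homogenized:
  assumes monic: "lead_coeff f = 1" and Y: "Y \<noteq> 0"
  shows "rel_norm_lin f X Y = Y ^ degree f * poly f (X / Y)"
proof -
  define Z where "Z = {\<rho>. poly f \<rho> = 0}"
  have decomp: "(\<Prod>z\<in>Z. [:-z, 1:] ^ order z f) = f"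
    using complex_poly_decompose[of f] monic by (simp add: Z_def)
  have "degree f = (\<Sum>z\<in>Z. degree ([:-z, 1:] ^ order z f))"
    by (subst decomp[symmetric], rule degree_prod_sum_eq) auto
  then have deg: "degree f = (\<Sum>z\<in>Z. order z f)" by (simp add: degree_linear_power)
  have "Y ^ degree f * poly f (X / Y) = (\<Prod>z\<in>Z. (Y * (X / Y - z)) ^ order z f)"
    by (subst (2) decomp[symmetric]) (simp add: deg power_sum poly_prod prod.distrib power_mult_distrib)
  also have "\<dots> = (\<Prod>z\<in>Z. (X - z * Y) ^ order z f)"
    using Y by (simp add: right_diff_distrib mult.commute)
  finally show ?thesis by (simp add: rel_norm_lin_def Z_def)
qed

lemma divide_le_of_le_mult:
  fixes a B c z :: real
  assumes "a \<ge> 0" "B > 0" "z > 0" "B \<le> c * z"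
  shows "a / z \<le> a * c / B"
proof -
  have "c > 0" using assms by (smt (verit) mult_nonpos_nonneg)
  then have "a / z = a * c / (c * z)" by simp
  also have "\<dots> \<le> a * c / B" using assms \<open>c > 0\<close> by (intro divide_left_mono) auto
  finally show ?thesis .
qed

section \<open>Lagrange interpolation\<close>

lemma lagrange_basis_exists:
  fixes z :: "nat \<Rightarrow> complex"
  assumes distinct: "inj_on z {1..n}"
  obtains L where "\<And>k. k \<in> {1..n} \<Longrightarrow> degree (L k) < n"
    "\<And>k i. k \<in> {1..n} \<Longrightarrow> i \<in> {1..n} \<Longrightarrow> poly (L k) (z i) = (if i = k then 1 else 0)"
proof -
  define L where "L k = smult (inverse (\<Prod>j\<in>{1..n}-{k}. z k - z j)) (\<Prod>j\<in>{1..n}-{k}. [:- z j, 1:])" for k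
  have "degree (L k) < n" if k: "k \<in> {1..n}" for k
  proof -
    have "degree (L k) \<le> degree (\<Prod>j\<in>{1..n}-{k}. [:- z j, 1:])"
      unfolding L_def by (rule degree_smult_le)
    also have "\<dots> \<le> (\<Sum>j\<in>{1..n}-{k}. degree [:- z j, 1:])"
      using degree_prod_sum_le[of "{1..n}-{k}" "\<lambda>j. [:- z j, 1:]"] by (simp add: o_def)
    also have "\<dots> = n - 1" using k by simp
    finally show ?thesis using k by arith
  qed
  moreover have "poly (L k) (z i) = (if i = k then 1 else 0)" if k: "k \<in> {1..n}" and i: "i \<in> {1..n}" for k i
  proof -
    have "poly (L k) (z i) = inverse (\<Prod>j\<in>{1..n}-{k}. z k - z j) * (\<Prod>j\<in>{1..n}-{k}. z i - z j)"
      by (simp add: L_def poly_prod)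
    moreover have "z k \<noteq> z j" if "j \<in> {1..n} - {k}" for j
      using that k distinct by (auto dest: inj_onD)
    then have "(\<Prod>j\<in>{1..n}-{k}. z k - z j) \<noteq> 0" by (simp add: prod_zero_iff)
    moreover have "(\<Prod>j\<in>{1..n}-{k}. z i - z j) = 0" if "i \<noteq> k"
      using i that by (intro prod_zero) auto
    ultimately show ?thesis by auto
  qed
  ultimately show thesis using that by blast
qed

lemma poly_eq_0_of_roots:
  fixes z :: "nat \<Rightarrow> complex"
  assumes "inj_on z {1..n}" "degree Q < n" "\<And>i. i \<in> {1..n} \<Longrightarrow> poly Q (z i) = 0"
  shows "Q = 0"
proof (rule ccontr)
  assume "Q \<noteq> 0"
  then have "card (z ` {1..n}) \<le> card {x. poly Q x = 0}"
    using assms(3) by (intro card_mono poly_roots_finite) auto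
  also have "\<dots> \<le> degree Q" using \<open>Q \<noteq> 0\<close> by (rule card_poly_roots_bound)
  finally show False using assms(1,2) by (simp add: card_image)
qed

lemma lagrange_interpolation:
  fixes z :: "nat \<Rightarrow> complex"
  assumes distinct: "inj_on z {1..n}" and deg_L: "\<And>k. k \<in> {1..n} \<Longrightarrow> degree (L k) < n"
    and L: "\<And>k i. k \<in> {1..n} \<Longrightarrow> i \<in> {1..n} \<Longrightarrow> poly (L k) (z i) = (if i = k then 1 else 0)"
    and P: "degree P < n"
  shows "P = (\<Sum>k=1..n. smult (poly P (z k)) (L k))"
proof -
  define Q where "Q = P - (\<Sum>k=1..n. smult (poly P (z k)) (L k))"
  have "degree (smult (poly P (z k)) (L k)) < n" if "k \<in> {1..n}" for k
    using le_less_trans[OF degree_smult_le deg_L[OF that]] .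
  then have "degree Q < n"
    unfolding Q_def using P by (intro degree_diff_less degree_sum_less) auto
  moreover have "poly Q (z i) = 0" if i: "i \<in> {1..n}" for i
  proof -
    have "(\<Sum>k=1..n. poly P (z k) * poly (L k) (z i)) = (\<Sum>k=1..n. if k = i then poly P (z k) else 0)"
      using i by (intro sum.cong) (auto simp: L)
    then show ?thesis using i by (simp add: Q_def poly_sum)
  qed
  ultimately have "Q = 0" by (rule poly_eq_0_of_roots[OF distinct])
  then show ?thesis unfolding Q_def by simp
qed

lemma coeff_bound_by_values:
  fixes z :: "nat \<Rightarrow> complex"
  assumes distinct: "inj_on z {1..n}"
  obtains C where "C \<ge> 0"
    "\<And>P l. degree P < n \<Longrightarrow> cmod (coeff P l) \<le> C * (\<Sum>k=1..n. cmod (poly P (z k)))"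
proof -
  obtain L where deg_L: "\<And>k. k \<in> {1..n} \<Longrightarrow> degree (L k) < n"
    and L: "\<And>k i. k \<in> {1..n} \<Longrightarrow> i \<in> {1..n} \<Longrightarrow> poly (L k) (z i) = (if i = k then 1 else 0)"
    using lagrange_basis_exists[OF distinct] by metis
  define C where "C = (\<Sum>k=1..n. \<Sum>l<n. cmod (coeff (L k) l))"
  have C_ge: "cmod (coeff (L k) l) \<le> C" if "k \<in> {1..n}" for k l
  proof (cases "l < n")
    case True
    have "cmod (coeff (L k) l) \<le> (\<Sum>l<n. cmod (coeff (L k) l))" using True by (intro member_le_sum) auto
    also have "\<dots> \<le> C" unfolding C_def using that by (intro member_le_sum sum_nonneg) auto
    finally show ?thesis .
  next
    case False
    then show ?thesis using deg_L[OF that] by (simp add: coeff_eq_0 C_def sum_nonneg)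
  qed
  have "cmod (coeff P l) \<le> C * (\<Sum>k=1..n. cmod (poly P (z k)))" if "degree P < n" for P l
  proof -
    from arg_cong[OF lagrange_interpolation[OF distinct deg_L L that], of "\<lambda>p. coeff p l"]
    have "coeff P l = (\<Sum>k=1..n. poly P (z k) * coeff (L k) l)" by (simp add: coeff_sum)
    then have "cmod (coeff P l) \<le> (\<Sum>k=1..n. cmod (poly P (z k)) * cmod (coeff (L k) l))"
      by (simp add: norm_sum norm_mult flip: norm_mult)
    also have "\<dots> \<le> (\<Sum>k=1..n. cmod (poly P (z k)) * C)"
      using C_ge by (intro sum_mono mult_left_mono) auto
    finally show ?thesis by (simp add: sum_distrib_left mult.commute)
  qed
  moreover have "C \<ge> 0" unfolding C_def by (intro sum_nonneg) auto
  ultimately show ?thesis using that by blast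
qed

lemma house_M_ge: "j \<in> {1..m} \<Longrightarrow> cmod (\<sigma> j \<gamma>) \<le> house_M m \<sigma> \<gamma>"
  unfolding house_M_def by (intro Max_ge) auto

lemma house_M_attained:
  assumes "m \<ge> 1"
  obtains j where "j \<in> {1..m}" "house_M m \<sigma> \<gamma> = cmod (\<sigma> j \<gamma>)"
proof -
  have "house_M m \<sigma> \<gamma> \<in> (\<lambda>j. cmod (\<sigma> j \<gamma>)) ` {1..m}"
    unfolding house_M_def using assms by (intro Max_in) auto
  then show ?thesis using that by auto
qed

lemma house_M_nonneg: "m \<ge> 1 \<Longrightarrow> house_M m \<sigma> \<gamma> \<ge> 0"
  by (metis house_M_attained norm_ge_zero)

section \<open>Integrality\<close>

lemma rat_common_denominator:
  fixes q :: "'a \<Rightarrow> rat"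
  assumes "finite I"
  obtains \<Delta> :: int where "\<Delta> > 0" "\<And>i. i \<in> I \<Longrightarrow> of_int \<Delta> * q i \<in> \<int>"
  using assms
proof (induction I arbitrary: thesis rule: finite_induct)
  case empty
  then show ?case using zero_less_one by blast
next
  case (insert i I)
  obtain \<Delta> :: int where \<Delta>: "\<Delta> > 0" "\<And>j. j \<in> I \<Longrightarrow> of_int \<Delta> * q j \<in> \<int>"
    using insert.IH by blast
  obtain a b where ab: "quotient_of (q i) = (a, b)" by fastforce
  then have "b > 0" "q i = of_int a / of_int b"
    by (simp_all add: quotient_of_denom_pos quotient_of_div)
  then have "of_int (\<Delta> * b) * q i \<in> \<int>" by simp
  moreover have "of_int (\<Delta> * b) * q j \<in> \<int>" if "j \<in> I" for j
    using \<Delta>(2)[OF that] by (metis Ints_mult Ints_of_int mult.commute mult.left_commute of_int_mult)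
  ultimately show ?case using insert.prems[of "\<Delta> * b"] \<Delta>(1) \<open>b > 0\<close> by auto
qed

lemma shift_reduce_degree_less:
  fixes g B :: "'a::idom poly"
  assumes monic: "lead_coeff g = 1" and deg: "degree B < degree g"
  shows "degree (pCons 0 B - smult (coeff B (degree g - 1)) g) < degree g"
proof -
  define B' where "B' = pCons 0 B - smult (coeff B (degree g - 1)) g"
  have "degree (pCons 0 B) \<le> degree g" using deg by (cases "B = 0") auto
  then have "degree B' \<le> degree g" unfolding B'_def by (metis degree_diff_le degree_smult_le)
  moreover have "coeff B' (degree g) = 0"
    using deg monic by (cases "degree g") (simp_all add: B'_def)
  then have "degree B' \<noteq> degree g \<or> B' = 0" using leading_coeff_0_iff by metis
  ultimately show ?thesis using deg unfolding B'_def[symmetric] by auto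
qed

lemma algebraic_int_power_reduction:
  fixes \<alpha> :: complex
  assumes monic: "lead_coeff g = 1" and int: "\<forall>i. coeff g i \<in> \<int>" and root: "poly g \<alpha> = 0"
  obtains B where "\<And>N i. coeff (B N) i \<in> \<int>" "\<And>N. degree (B N) < degree g" "\<And>N. poly (B N) \<alpha> = \<alpha> ^ N"
proof -
  have deg_g: "degree g \<ge> 1"
    using monic root by (cases "degree g") (auto elim!: degree_eq_zeroE)
  have "\<exists>B. (\<forall>i. coeff B i \<in> \<int>) \<and> degree B < degree g \<and> poly B \<alpha> = \<alpha> ^ N" for N
  proof (induction N)
    case 0
    show ?case using deg_g by (intro exI[of _ 1]) (simp add: coeff_1)
  next
    case (Suc N)
    then obtain B where B: "\<forall>i. coeff B i \<in> \<int>" "degree B < degree g" "poly B \<alpha> = \<alpha> ^ N" by blast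
    define B' where "B' = pCons 0 B - smult (coeff B (degree g - 1)) g"
    have "coeff B' i \<in> \<int>" for i
      using B(1) int unfolding B'_def by (cases i) auto
    moreover have "degree B' < degree g"
      unfolding B'_def using shift_reduce_degree_less[OF monic B(2)] .
    moreover have "poly B' \<alpha> = \<alpha> ^ Suc N" by (simp add: B'_def B(3) root)
    ultimately show ?case by blast
  qed
  then show ?thesis using that by metis
qed

section \<open>Coordinates with respect to an integral basis\<close>

locale number_field_basis = complex_subfield M for M +
  fixes m :: nat and \<omega> :: "nat \<Rightarrow> complex" and \<sigma> :: "nat \<Rightarrow> complex \<Rightarrow> complex"
    and Sinv :: "nat \<Rightarrow> nat \<Rightarrow> complex"
  assumes basis: "integral_basis M m \<omega>"
    and embeddings: "\<And>j. j \<in> {1..m} \<Longrightarrow> field_emb M (\<sigma> j)"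
    and Sinv_left: "\<And>i k. i \<in> {1..m} \<Longrightarrow> k \<in> {1..m} \<Longrightarrow>
          (\<Sum>j=1..m. Sinv i j * \<sigma> j (\<omega> k)) = (if i = k then 1 else 0)"
begin

definition Sinv_norm :: real where
  "Sinv_norm = Max ((\<lambda>i. \<Sum>j=1..m. cmod (Sinv i j)) ` {1..m})"

lemma subfield_embedding: "j \<in> {1..m} \<Longrightarrow> subfield_embedding M (\<sigma> j)"
  using embeddings by unfold_locales

lemma rat_span: "M = {(\<Sum>k=1..m. of_rat (q k) * \<omega> k) | q. True}"
  using basis unfolding integral_basis_def by blast

lemma basis_mem:
  assumes "k \<in> {1..m}"
  shows "\<omega> k \<in> M"
proof -
  have "(\<Sum>l=1..m. of_rat (if l = k then 1 else 0) * \<omega> l) = (\<Sum>l=1..m. if l = k then \<omega> l else 0)"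
    by (intro sum.cong) auto
  also have "\<dots> = \<omega> k" using assms by simp
  finally show ?thesis by (subst rat_span) (auto intro: sym)
qed

lemma field_degree_pos: "m \<ge> 1"
  using one_mem rat_span by (cases m) auto

lemma int_comb_mem: "(\<Sum>k=1..m. of_int (w k) * \<omega> k) \<in> M"
  by (intro sum_mem mult_mem of_int_mem basis_mem)

lemma emb_int_comb:
  assumes "j \<in> {1..m}"
  shows "\<sigma> j (\<Sum>k=1..m. of_int (w k) * \<omega> k) = (\<Sum>k=1..m. of_int (w k) * \<sigma> j (\<omega> k))"
proof -
  interpret subfield_embedding M "\<sigma> j" using subfield_embedding[OF assms] .
  have "\<sigma> j (\<Sum>k=1..m. of_int (w k) * \<omega> k) = (\<Sum>k=1..m. \<sigma> j (of_int (w k) * \<omega> k))"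
    by (rule emb_sum) (simp add: mult_mem of_int_mem basis_mem)
  also have "\<dots> = (\<Sum>k=1..m. of_int (w k) * \<sigma> j (\<omega> k))"
    by (intro sum.cong refl) (simp add: emb_mult of_int_mem basis_mem emb_of_int)
  finally show ?thesis .
qed

lemma int_comb_coordinate:
  assumes t: "t \<in> {1..m}"
  shows "(\<Sum>j=1..m. Sinv t j * \<sigma> j (\<Sum>k=1..m. of_int (w k) * \<omega> k)) = of_int (w t)"
proof -
  have "(\<Sum>j=1..m. Sinv t j * \<sigma> j (\<Sum>k=1..m. of_int (w k) * \<omega> k))
      = (\<Sum>j=1..m. \<Sum>k=1..m. of_int (w k) * (Sinv t j * \<sigma> j (\<omega> k)))"
    by (intro sum.cong refl) (simp only: emb_int_comb, simp add: sum_distrib_left mult_ac)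
  also have "\<dots> = (\<Sum>k=1..m. of_int (w k) * (\<Sum>j=1..m. Sinv t j * \<sigma> j (\<omega> k)))"
    by (subst sum.swap) (simp add: sum_distrib_left)
  also have "\<dots> = (\<Sum>k=1..m. if k = t then of_int (w k) else 0)"
    by (intro sum.cong refl) (simp only: Sinv_left[OF t], simp)
  finally show ?thesis using t by simp
qed

lemma row_sum_le_Sinv_norm: "t \<in> {1..m} \<Longrightarrow> (\<Sum>j=1..m. cmod (Sinv t j)) \<le> Sinv_norm"
  unfolding Sinv_norm_def by (intro Max_ge) auto

lemma Sinv_norm_nonneg: "Sinv_norm \<ge> 0"
  using row_sum_le_Sinv_norm[of 1] field_degree_pos sum_nonneg[of "{1..m}" "\<lambda>j. cmod (Sinv 1 j)"] by simp

lemma int_comb_coordinate_bound: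
  assumes t: "t \<in> {1..m}"
    and B: "\<And>j. j \<in> {1..m} \<Longrightarrow> cmod (\<sigma> j (\<Sum>k=1..m. of_int (w k) * \<omega> k)) \<le> B"
  shows "\<bar>w t\<bar> \<le> Sinv_norm * B"
proof -
  have "B \<ge> 0" using B[of 1] field_degree_pos by (meson atLeastAtMost_iff le_refl norm_ge_zero order_trans)
  have "\<bar>w t\<bar> = cmod (\<Sum>j=1..m. Sinv t j * \<sigma> j (\<Sum>k=1..m. of_int (w k) * \<omega> k))"
    unfolding int_comb_coordinate[OF t] by simp
  also have "\<dots> \<le> (\<Sum>j=1..m. cmod (Sinv t j) * B)"
    by (rule order.trans[OF norm_sum sum_mono]) (simp only: norm_mult, intro mult_left_mono B, simp_all)
  also have "\<dots> \<le> Sinv_norm * B"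
    using row_sum_le_Sinv_norm[OF t] \<open>B \<ge> 0\<close> by (simp add: sum_distrib_right[symmetric] mult_right_mono)
  finally show ?thesis by simp
qed

lemma int_span: "ring_of_integers M = {(\<Sum>k=1..m. of_int (w k) * \<omega> k) | w. True}"
  using basis unfolding integral_basis_def by blast

lemma int_comb_in_ring_of_integers: "(\<Sum>k=1..m. of_int (w k) * \<omega> k) \<in> ring_of_integers M"
  unfolding int_span by blast

lemma ring_of_integers_add:
  assumes "y \<in> ring_of_integers M" "z \<in> ring_of_integers M"
  shows "y + z \<in> ring_of_integers M"
proof -
  obtain v w where "y = (\<Sum>k=1..m. of_int (v k) * \<omega> k)" "z = (\<Sum>k=1..m. of_int (w k) * \<omega> k)"
    using assms unfolding int_span by blast
  then have "y + z = (\<Sum>k=1..m. of_int (v k + w k) * \<omega> k)"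
    by (simp only: of_int_add distrib_right sum.distrib)
  then show ?thesis by (simp only: int_comb_in_ring_of_integers)
qed

lemma ring_of_integers_scale:
  assumes "z \<in> ring_of_integers M"
  shows "of_int b * z \<in> ring_of_integers M"
proof -
  obtain w where "z = (\<Sum>k=1..m. of_int (w k) * \<omega> k)" using assms unfolding int_span by blast
  then have "of_int b * z = (\<Sum>k=1..m. of_int b * (of_int (w k) * \<omega> k))"
    by (simp only: sum_distrib_left)
  also have "\<dots> = (\<Sum>k=1..m. of_int (b * w k) * \<omega> k)"
    by (simp only: of_int_mult mult.assoc)
  finally have "of_int b * z = (\<Sum>k=1..m. of_int (b * w k) * \<omega> k)" .
  then show ?thesis by (simp only: int_comb_in_ring_of_integers)
qed

lemma ring_of_integers_int_comb:
  "(\<And>i. i \<in> I \<Longrightarrow> z i \<in> ring_of_integers M) \<Longrightarrow> (\<Sum>i\<in>I. of_int (b i) * z i) \<in> ring_of_integers M"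
proof (induction I rule: infinite_finite_induct)
  case (insert i I)
  then show ?case by (simp add: ring_of_integers_add ring_of_integers_scale)
qed (simp_all add: ring_of_integers_def zero_mem)

lemma ring_of_integers_eq_0_if_conjugates_small:
  assumes z: "z \<in> ring_of_integers M"
    and small: "\<And>j. j \<in> {1..m} \<Longrightarrow> cmod (\<sigma> j z) \<le> B" and "Sinv_norm * B < 1"
  shows "z = 0"
proof -
  obtain w where w: "z = (\<Sum>k=1..m. of_int (w k) * \<omega> k)" using z unfolding int_span by blast
  have "w t = 0" if "t \<in> {1..m}" for t
    using int_comb_coordinate_bound[OF that small[unfolded w]] \<open>Sinv_norm * B < 1\<close> by linarith
  then show ?thesis using w by simp
qed

lemma common_denominator:
  assumes "finite F" "F \<subseteq> M"
  obtains \<Delta> :: int where "\<Delta> > 0" "\<And>z. z \<in> F \<Longrightarrow> of_int \<Delta> * z \<in> ring_of_integers M"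
proof -
  have "\<forall>z\<in>M. \<exists>q. z = (\<Sum>k=1..m. of_rat (q k) * \<omega> k)" using rat_span by blast
  from bchoice[OF this] obtain Q where Q: "\<forall>z\<in>M. z = (\<Sum>k=1..m. of_rat (Q z k) * \<omega> k)" by blast
  obtain \<Delta> :: int where \<Delta>: "\<Delta> > 0" "\<And>zk. zk \<in> F \<times> {1..m} \<Longrightarrow> of_int \<Delta> * case_prod Q zk \<in> \<int>"
    using rat_common_denominator[of "F \<times> {1..m}" "case_prod Q"] assms(1) by blast
  have "of_int \<Delta> * z \<in> ring_of_integers M" if z: "z \<in> F" for z
  proof -
    have "\<forall>k\<in>{1..m}. \<exists>v. of_int \<Delta> * Q z k = of_int v" using \<Delta>(2) z by (auto elim!: Ints_cases)
    then obtain w where w: "\<And>k. k \<in> {1..m} \<Longrightarrow> of_int \<Delta> * Q z k = of_int (w k)" by metis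
    have "z = (\<Sum>k=1..m. of_rat (Q z k) * \<omega> k)" using Q z assms(2) by blast
    then have "of_int \<Delta> * z = of_int \<Delta> * (\<Sum>k=1..m. of_rat (Q z k) * \<omega> k)"
      by (rule arg_cong[where f = "\<lambda>x. of_int \<Delta> * x"])
    also have "\<dots> = (\<Sum>k=1..m. of_rat (of_int \<Delta> * Q z k) * \<omega> k)"
      by (simp add: sum_distrib_left of_rat_mult mult_ac)
    also have "\<dots> = (\<Sum>k=1..m. of_int (w k) * \<omega> k)" by (simp add: w)
    finally show ?thesis by (simp only: int_comb_in_ring_of_integers)
  qed
  then show ?thesis using that \<Delta>(1) by blast
qed

lemma house_M_zero: "house_M m \<sigma> 0 = 0"
proof -
  have "(\<lambda>j. cmod (\<sigma> j 0)) ` {1..m} = {0}"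
    using field_degree_pos subfield_embedding.emb_zero[OF subfield_embedding] by auto
  then show ?thesis by (simp add: house_M_def)
qed

lemma max_coordinate_pos:
  assumes "Y = (\<Sum>k=1..m. of_int (y k) * \<omega> k)" "Y \<noteq> 0"
  shows "max (Max ((\<lambda>k. real_of_int \<bar>x k\<bar>) ` {1..m})) (Max ((\<lambda>k. real_of_int \<bar>y k\<bar>) ` {1..m})) > 0"
proof -
  have "\<exists>t\<in>{1..m}. y t \<noteq> 0"
  proof (rule ccontr)
    assume "\<not> ?thesis"
    then have "Y = 0" using assms(1) by simp
    then show False using assms(2) by contradiction
  qed
  then obtain t where "t \<in> {1..m}" "y t \<noteq> 0" by blast
  then have "0 < real_of_int \<bar>y t\<bar>" by simp
  also have "\<dots> \<le> Max ((\<lambda>k. real_of_int \<bar>y k\<bar>) ` {1..m})" using \<open>t \<in> {1..m}\<close> by (intro Max_ge) auto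
  finally show ?thesis by linarith
qed

end

section \<open>The relative extension\<close>

locale relative_extension = number_field_basis M m \<omega> \<sigma> Sinv for M m \<omega> \<sigma> Sinv +
  fixes f :: "complex poly" and n :: nat and r :: "nat \<Rightarrow> nat \<Rightarrow> complex"
  assumes monic: "lead_coeff f = 1" and irreducible: "irreducible_over M f"
    and degree_f: "degree f = n"
    and splits: "\<And>j. j \<in> {1..m} \<Longrightarrow> map_poly (\<sigma> j) f = (\<Prod>k=1..n. [:- r j k, 1:])"
begin

text \<open>The house of \<open>\<alpha>\<close>: the \<open>r j k\<close> are all conjugates of \<open>\<alpha>\<close> over \<open>\<rat>\<close>.\<close>
definition house_alpha :: real where
  "house_alpha = Max {cmod (r j k) | j k. j \<in> {1..m} \<and> k \<in> {1..n}}"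

lemma degree_f_pos: "n \<ge> 1"
  using irreducible_overD(2)[OF irreducible] degree_f by simp

lemma conjugates_inj:
  assumes "j \<in> {1..m}"
  shows "inj_on (r j) {1..n}"
  using subfield_embedding.conjugates_distinct[OF subfield_embedding[OF assms] irreducible splits[OF assms]]
  unfolding inj_on_def by blast

lemma conjugates_finite: "finite {cmod (r j k) | j k. j \<in> {1..m} \<and> k \<in> {1..n}}"
proof -
  have "{cmod (r j k) | j k. j \<in> {1..m} \<and> k \<in> {1..n}} = (\<lambda>(j, k). cmod (r j k)) ` ({1..m} \<times> {1..n})"
    by (auto simp: image_iff) blast
  then show ?thesis by simp
qed

lemma conjugate_le_house_alpha: "j \<in> {1..m} \<Longrightarrow> k \<in> {1..n} \<Longrightarrow> cmod (r j k) \<le> house_alpha"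
  unfolding house_alpha_def using conjugates_finite by (intro Max_ge) auto

lemma house_alpha_nonneg: "house_alpha \<ge> 0"
  using order_trans[OF norm_ge_zero conjugate_le_house_alpha[of 1 1]] field_degree_pos degree_f_pos by simp

lemma conjugate_value:
  assumes root: "poly f \<alpha> = 0" and p: "poly_over M p" "poly p \<alpha> = \<alpha> ^ N"
    and "j \<in> {1..m}" "k \<in> {1..n}"
  shows "poly (map_poly (\<sigma> j) p) (r j k) = r j k ^ N"
proof -
  interpret subfield_embedding M "\<sigma> j" using subfield_embedding \<open>j \<in> {1..m}\<close> .
  have "poly_over M (monom 1 N - p)" by (intro poly_over_diff poly_over_monom one_mem p)
  moreover have "poly (monom 1 N - p) \<alpha> = 0" using p(2) by (simp add: poly_monom)
  ultimately have "poly (map_poly (\<sigma> j) (monom 1 N - p)) (r j k) = 0"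
    using conjugate_root[OF irreducible splits[OF \<open>j \<in> {1..m}\<close>] _ root] \<open>k \<in> {1..n}\<close> by blast
  then show ?thesis
    using p(1) by (simp add: map_emb_diff poly_over_monom one_mem map_emb_monom emb_one poly_monom)
qed

lemma conjugate_rel_norm_lin:
  assumes X: "X \<in> M" and Y: "Y \<in> M" "Y \<noteq> 0" and j: "j \<in> {1..m}"
  shows "\<sigma> j (rel_norm_lin f X Y) = (\<Prod>k=1..n. \<sigma> j X - r j k * \<sigma> j Y)"
proof -
  interpret subfield_embedding M "\<sigma> j" using subfield_embedding j .
  have f: "poly_over M f" using irreducible_overD(1)[OF irreducible] .
  then have coeff_mem: "coeff f i * X ^ i * Y ^ (n - i) \<in> M" for i
    using X Y by (intro mult_mem power_mem) (auto simp: poly_over_def)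
  have "\<sigma> j Y \<noteq> 0" using emb_nonzero Y by blast
  have "rel_norm_lin f X Y = (\<Sum>i\<le>n. coeff f i * X ^ i * Y ^ (n - i))"
    using rel_norm_lin_homogenized[OF monic Y(2)] homogenized_poly_eval[OF Y(2), of f n] degree_f by simp
  then have "\<sigma> j (rel_norm_lin f X Y) = (\<Sum>i\<le>n. coeff (map_poly (\<sigma> j) f) i * \<sigma> j X ^ i * \<sigma> j Y ^ (n - i))"
    using X Y f by (simp add: emb_sum coeff_mem emb_mult emb_power mult_mem power_mem coeff_map_emb poly_over_def)
  also have "\<dots> = \<sigma> j Y ^ n * poly (map_poly (\<sigma> j) f) (\<sigma> j X / \<sigma> j Y)"
    using \<open>\<sigma> j Y \<noteq> 0\<close> degree_f by (intro homogenized_poly_eval) (auto intro: order.trans[OF map_poly_degree_leq])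
  also have "\<dots> = (\<Prod>k=1..n. \<sigma> j X - r j k * \<sigma> j Y)"
    unfolding splits[OF j] using homogenized_prod_linear[OF \<open>\<sigma> j Y \<noteq> 0\<close>] .
  finally show ?thesis .
qed

lemma remainder_mod_f:
  assumes root: "poly f \<alpha> = 0" and p: "poly_over M p"
  obtains q where "poly_over M q" "degree q < n" "poly q \<alpha> = poly p \<alpha>"
proof -
  note f = irreducible_overD(1,3)[OF irreducible]
  obtain d q where "poly_over M q" "p = d * f + q" "q = 0 \<or> degree q < degree f"
    using poly_over_divide[OF f p] by blast
  then show ?thesis using that root degree_f degree_f_pos by fastforce
qed

lemma reduced_powers:
  assumes root: "poly f \<alpha> = 0"
  obtains R and \<Delta> :: int where "\<Delta> > 0" "\<And>i. poly_over M (R i)" "\<And>i. degree (R i) < n"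
    "\<And>i. poly (R i) \<alpha> = \<alpha> ^ i" "\<And>i l. i < D \<Longrightarrow> of_int \<Delta> * coeff (R i) l \<in> ring_of_integers M"
proof -
  have "\<exists>R. poly_over M R \<and> degree R < n \<and> poly R \<alpha> = \<alpha> ^ i" for i
    using remainder_mod_f[OF root poly_over_monom[OF one_mem, of i]] by (metis poly_monom mult_1)
  then obtain R where R: "\<And>i. poly_over M (R i)" "\<And>i. degree (R i) < n" "\<And>i. poly (R i) \<alpha> = \<alpha> ^ i"
    by metis
  define F where "F = (\<lambda>(i, l). coeff (R i) l) ` ({..<D} \<times> {..<n})"
  have "F \<subseteq> M" using R(1) by (auto simp: F_def poly_over_def)
  then obtain \<Delta> :: int where \<Delta>: "\<Delta> > 0" "\<And>z. z \<in> F \<Longrightarrow> of_int \<Delta> * z \<in> ring_of_integers M"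
    using common_denominator[of F] by (auto simp: F_def)
  have "of_int \<Delta> * coeff (R i) l \<in> ring_of_integers M" if "i < D" for i l
  proof (cases "l < n")
    case True
    then show ?thesis using \<Delta>(2) that by (auto simp: F_def)
  next
    case False
    then show ?thesis using R(2)[of i] by (simp add: coeff_eq_0 ring_of_integers_def zero_mem)
  qed
  then show ?thesis using that \<Delta>(1) R by blast
qed

text \<open>Reducing \<open>x\<^sup>N\<close> modulo an integral equation of \<open>\<alpha>\<close> of degree \<open>D\<close> writes \<open>\<alpha>\<^sup>N\<close> as an
  integral combination of \<open>1, \<alpha>, \<dots>, \<alpha>\<^sup>D\<^sup>-\<^sup>1\<close>, whose reduced representations share a
  common denominator.\<close>
lemma power_representation:
  assumes root: "poly f \<alpha> = 0" and int: "algebraic_int \<alpha>"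
  obtains \<Delta> :: int and P :: "nat \<Rightarrow> complex poly"
  where "\<Delta> > 0" "\<And>N. poly_over M (P N)" "\<And>N. degree (P N) < n" "\<And>N. poly (P N) \<alpha> = \<alpha> ^ N"
    "\<And>N l. of_int \<Delta> * coeff (P N) l \<in> ring_of_integers M"
proof -
  obtain g where g: "lead_coeff g = 1" "\<forall>i. coeff g i \<in> \<int>" "poly g \<alpha> = 0"
    using int by (auto elim: algebraic_int.cases)
  define D where "D = degree g"
  obtain B where B: "\<And>N i. coeff (B N) i \<in> \<int>" "\<And>N. degree (B N) < D" "\<And>N. poly (B N) \<alpha> = \<alpha> ^ N"
    using algebraic_int_power_reduction[OF g] unfolding D_def by metis
  obtain R and \<Delta> :: int where \<Delta>: "\<Delta> > 0" and R: "\<And>i. poly_over M (R i)" "\<And>i. degree (R i) < n"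
    "\<And>i. poly (R i) \<alpha> = \<alpha> ^ i" "\<And>i l. i < D \<Longrightarrow> of_int \<Delta> * coeff (R i) l \<in> ring_of_integers M"
    using reduced_powers[OF root] by metis
  define P where "P N = (\<Sum>i<D. smult (coeff (B N) i) (R i))" for N
  show thesis
  proof (rule that[OF \<Delta>])
    fix N
    show "poly_over M (P N)"
      unfolding P_def using B(1) R(1) Ints_subset by (intro poly_over_sum poly_over_smult) auto
    show "degree (P N) < n"
      unfolding P_def using R(2) degree_f_pos
      by (intro degree_sum_less) (auto intro: le_less_trans[OF degree_smult_le])
    have "poly (P N) \<alpha> = (\<Sum>i<D. coeff (B N) i * \<alpha> ^ i)" by (simp add: P_def poly_sum R(3))
    also have "\<dots> = poly (B N) \<alpha>"
      unfolding poly_altdef using B(2)[of N] by (intro sum.mono_neutral_right) (auto simp: coeff_eq_0)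
    finally show "poly (P N) \<alpha> = \<alpha> ^ N" using B(3) by simp
    fix l
    have "\<forall>i. \<exists>z. coeff (B N) i = of_int z" using B(1)[of N] by (auto elim!: Ints_cases)
    then obtain b where b: "\<And>i. coeff (B N) i = of_int (b i)" by metis
    have "of_int \<Delta> * coeff (P N) l = (\<Sum>i<D. of_int (b i) * (of_int \<Delta> * coeff (R i) l))"
      by (simp add: P_def coeff_sum b sum_distrib_left mult_ac)
    then show "of_int \<Delta> * coeff (P N) l \<in> ring_of_integers M"
      using ring_of_integers_int_comb[of "{..<D}" "\<lambda>i. of_int \<Delta> * coeff (R i) l" b] R(4) by simp
  qed
qed

lemma conjugate_coeff_bound:
  obtains C where "C \<ge> 0" "\<And>j P l. j \<in> {1..m} \<Longrightarrow> degree P < n \<Longrightarrow>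
    cmod (coeff P l) \<le> C * (\<Sum>k=1..n. cmod (poly P (r j k)))"
proof -
  have "\<forall>j\<in>{1..m}. \<exists>C. C \<ge> 0 \<and> (\<forall>P l. degree P < n \<longrightarrow>
      cmod (coeff P l) \<le> C * (\<Sum>k=1..n. cmod (poly P (r j k))))"
    using coeff_bound_by_values[OF conjugates_inj] by metis
  then obtain C where C: "\<And>j. j \<in> {1..m} \<Longrightarrow> C j \<ge> 0"
    "\<And>j P l. j \<in> {1..m} \<Longrightarrow> degree P < n \<Longrightarrow> cmod (coeff P l) \<le> C j * (\<Sum>k=1..n. cmod (poly P (r j k)))"
    by metis
  have "C j \<le> sum C {1..m}" if "j \<in> {1..m}" for j
    using that C(1) by (intro member_le_sum) auto
  then have "cmod (coeff P l) \<le> sum C {1..m} * (\<Sum>k=1..n. cmod (poly P (r j k)))"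
    if "j \<in> {1..m}" "degree P < n" for j P l
    using C(2)[OF that] that(1) by (meson order.trans mult_right_mono sum_nonneg norm_ge_zero)
  moreover have "sum C {1..m} \<ge> 0" by (rule sum_nonneg) (rule C(1))
  ultimately show ?thesis using that by blast
qed

lemma power_coeff_conjugate_bound:
  assumes root: "poly f \<alpha> = 0"
  obtains C where "C \<ge> 0" "\<And>P N j l. poly_over M P \<Longrightarrow> degree P < n \<Longrightarrow> poly P \<alpha> = \<alpha> ^ N \<Longrightarrow>
    j \<in> {1..m} \<Longrightarrow> cmod (\<sigma> j (coeff P l)) \<le> C * (n * house_alpha ^ N)"
proof -
  obtain C where C: "C \<ge> 0" "\<And>j P l. j \<in> {1..m} \<Longrightarrow> degree P < n \<Longrightarrow>
    cmod (coeff P l) \<le> C * (\<Sum>k=1..n. cmod (poly P (r j k)))"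
    using conjugate_coeff_bound by blast
  have "cmod (\<sigma> j (coeff P l)) \<le> C * (n * house_alpha ^ N)"
    if P: "poly_over M P" "degree P < n" "poly P \<alpha> = \<alpha> ^ N" and j: "j \<in> {1..m}" for P N j l
  proof -
    interpret subfield_embedding M "\<sigma> j" using subfield_embedding[OF j] .
    have "(\<Sum>k=1..n. cmod (poly (map_poly (\<sigma> j) P) (r j k))) = (\<Sum>k=1..n. cmod (r j k) ^ N)"
      by (intro sum.cong refl) (simp only: conjugate_value[OF root P(1,3) j] norm_power)
    also have "\<dots> \<le> (\<Sum>k=1..n. house_alpha ^ N)"
      using conjugate_le_house_alpha[OF j] by (intro sum_mono power_mono) auto
    finally have values_small: "(\<Sum>k=1..n. cmod (poly (map_poly (\<sigma> j) P) (r j k))) \<le> n * house_alpha ^ N"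
      by simp
    have "degree (map_poly (\<sigma> j) P) < n" using P(2) by (rule le_less_trans[OF map_poly_degree_leq])
    then have "cmod (coeff (map_poly (\<sigma> j) P) l) \<le> C * (\<Sum>k=1..n. cmod (poly (map_poly (\<sigma> j) P) (r j k)))"
      by (rule C(2)[OF j])
    also have "\<dots> \<le> C * (n * house_alpha ^ N)" using values_small C(1) by (rule mult_left_mono)
    finally show ?thesis by (simp add: coeff_map_emb)
  qed
  with C(1) show ?thesis using that by blast
qed

lemma house_alpha_ge_one:
  assumes n: "n \<ge> 2" and root: "poly f \<alpha> = 0" and int: "algebraic_int \<alpha>"
  shows "house_alpha \<ge> 1"
proof (rule ccontr)
  assume "\<not> house_alpha \<ge> 1"
  then have H1: "house_alpha < 1" by simp
  obtain \<Delta> :: int and P where \<Delta>: "\<Delta> > 0" and P: "\<And>N. poly_over M (P N)" "\<And>N. degree (P N) < n"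
    "\<And>N. poly (P N) \<alpha> = \<alpha> ^ N" "\<And>N l. of_int \<Delta> * coeff (P N) l \<in> ring_of_integers M"
    using power_representation[OF root int] by metis
  obtain C where C: "C \<ge> 0" "\<And>P N j l. poly_over M P \<Longrightarrow> degree P < n \<Longrightarrow> poly P \<alpha> = \<alpha> ^ N \<Longrightarrow>
    j \<in> {1..m} \<Longrightarrow> cmod (\<sigma> j (coeff P l)) \<le> C * (n * house_alpha ^ N)"
    using power_coeff_conjugate_bound[OF root] by blast
  define K where "K = Sinv_norm * (of_int \<Delta> * (C * n))"
  have "K \<ge> 0" using Sinv_norm_nonneg \<Delta> C(1) by (simp add: K_def)
  obtain N where "house_alpha ^ N < 1 / (K + 1)" using real_arch_pow_inv[OF _ H1, of "1 / (K + 1)"] \<open>K \<ge> 0\<close> by auto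
  then have small: "Sinv_norm * (of_int \<Delta> * (C * (n * house_alpha ^ N))) < 1"
    using \<open>K \<ge> 0\<close> house_alpha_nonneg by (simp add: K_def field_simps) (smt (verit) mult_nonneg_nonneg zero_le_power)
  have "coeff (P N) l = 0" for l
  proof -
    have "cmod (\<sigma> j (of_int \<Delta> * coeff (P N) l)) \<le> of_int \<Delta> * (C * (n * house_alpha ^ N))"
      if j: "j \<in> {1..m}" for j
    proof -
      interpret subfield_embedding M "\<sigma> j" using subfield_embedding[OF j] .
      show ?thesis using C(2)[OF P(1)[of N] P(2)[of N] P(3)[of N] j, of l] \<Delta> P(1)
        by (simp add: emb_mult of_int_mem emb_of_int poly_over_def norm_mult)
    qed
    then have "of_int \<Delta> * coeff (P N) l = 0"
      by (rule ring_of_integers_eq_0_if_conjugates_small[OF P(4) _ small])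
    then show ?thesis using \<Delta> by simp
  qed
  then have "P N = 0" by (intro poly_eqI) simp
  then have "\<alpha> = 0" using P(3)[of N] by simp
  then show False using irreducible_over_root_nonzero[OF irreducible _ root] n degree_f by simp
qed

lemma smallest_conjugate_factor:
  assumes X: "X \<in> M" and Y: "Y \<in> M" and Y_pos: "house_M m \<sigma> Y > 0"
  obtains h i where "h \<in> {1..m}" "i \<in> {1..n}" "cmod (\<sigma> h X - r h i * \<sigma> h Y) \<le>
    cmod (\<sigma> h (rel_norm_lin f X Y)) / (\<Prod>j\<in>{1..n} - {i}. cmod (r h j - r h i) / 2) / house_M m \<sigma> Y ^ (n - 1)"
proof -
  obtain h where h: "h \<in> {1..m}" "house_M m \<sigma> Y = cmod (\<sigma> h Y)"
    using house_M_attained[OF field_degree_pos] by metis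
  then have "\<sigma> h Y \<noteq> 0" "Y \<noteq> 0" using Y_pos subfield_embedding.emb_zero[OF subfield_embedding] by auto
  then show ?thesis
    using that[OF h(1)] smallest_linear_factor_bound[OF degree_f_pos conjugates_inj[OF h(1)], of "\<sigma> h Y" "\<sigma> h X"]
    unfolding conjugate_rel_norm_lin[OF X Y \<open>Y \<noteq> 0\<close> h(1)] h(2) by metis
qed

lemma conjugate_le_twice_house:
  assumes X: "X \<in> M" and Y: "Y \<in> M" "Y \<noteq> 0" and j: "j \<in> {1..m}"
    and Y_big: "root n (house_M m \<sigma> (rel_norm_lin f X Y)) \<le> house_alpha * house_M m \<sigma> Y"
  shows "cmod (\<sigma> j X) \<le> 2 * house_alpha * house_M m \<sigma> Y"
proof -
  obtain k where k: "k \<in> {1..n}" and small: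
    "cmod (\<sigma> j X - r j k * \<sigma> j Y) \<le> root n (cmod (\<Prod>k=1..n. \<sigma> j X - r j k * \<sigma> j Y))"
    using exists_factor_le_root[OF degree_f_pos] by metis
  note small
  also have "\<dots> \<le> root n (house_M m \<sigma> (rel_norm_lin f X Y))"
    using house_M_ge[OF j, of \<sigma> "rel_norm_lin f X Y"] degree_f_pos
    unfolding conjugate_rel_norm_lin[OF X Y j] by simp
  finally have "cmod (\<sigma> j X - r j k * \<sigma> j Y) \<le> house_alpha * house_M m \<sigma> Y" using Y_big by linarith
  moreover have "cmod (r j k * \<sigma> j Y) \<le> house_alpha * house_M m \<sigma> Y"
    unfolding norm_mult using conjugate_le_house_alpha[OF j k] house_M_ge[OF j] house_alpha_nonneg
    by (intro mult_mono) auto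
  ultimately show ?thesis using norm_triangle_ineq[of "\<sigma> j X - r j k * \<sigma> j Y" "r j k * \<sigma> j Y"] by simp
qed

lemma max_coordinate_power_le:
  assumes root: "poly f \<alpha> = 0" and int: "algebraic_int \<alpha>"
    and X: "X = (\<Sum>k=1..m. of_int (x k) * \<omega> k)" and Y: "Y = (\<Sum>k=1..m. of_int (y k) * \<omega> k)" "Y \<noteq> 0"
    and Y_big: "root n (house_M m \<sigma> (rel_norm_lin f X Y)) / house_alpha < house_M m \<sigma> Y"
  shows "max (Max ((\<lambda>k. real_of_int \<bar>x k\<bar>) ` {1..m})) (Max ((\<lambda>k. real_of_int \<bar>y k\<bar>) ` {1..m})) ^ (n - 1)
    \<le> (2 * Sinv_norm * house_alpha * house_M m \<sigma> Y) ^ (n - 1)"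
proof (cases "n = 1")
  case False
  then have H1: "house_alpha \<ge> 1" using house_alpha_ge_one[OF _ root int] degree_f_pos by simp
  then have Y_big': "root n (house_M m \<sigma> (rel_norm_lin f X Y)) \<le> house_alpha * house_M m \<sigma> Y"
    using Y_big by (simp add: divide_less_eq mult.commute)
  have XY: "X \<in> M" "Y \<in> M" unfolding X Y(1) by (simp_all only: int_comb_mem)
  have "\<bar>x t\<bar> \<le> 2 * Sinv_norm * house_alpha * house_M m \<sigma> Y" if t: "t \<in> {1..m}" for t
  proof -
    have "\<And>j. j \<in> {1..m} \<Longrightarrow> cmod (\<sigma> j (\<Sum>k=1..m. of_int (x k) * \<omega> k)) \<le> 2 * house_alpha * house_M m \<sigma> Y"
      unfolding X[symmetric] using conjugate_le_twice_house[OF XY Y(2) _ Y_big'] .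
    from int_comb_coordinate_bound[OF t this] show ?thesis by (simp add: mult_ac)
  qed
  moreover have "\<bar>y t\<bar> \<le> 2 * Sinv_norm * house_alpha * house_M m \<sigma> Y" if t: "t \<in> {1..m}" for t
  proof -
    have "\<And>j. j \<in> {1..m} \<Longrightarrow> cmod (\<sigma> j (\<Sum>k=1..m. of_int (y k) * \<omega> k)) \<le> house_M m \<sigma> Y"
      unfolding Y(1)[symmetric] by (rule house_M_ge)
    from int_comb_coordinate_bound[OF t this]
    have "\<bar>y t\<bar> \<le> Sinv_norm * house_M m \<sigma> Y" by simp
    also have "\<dots> \<le> Sinv_norm * house_M m \<sigma> Y * (2 * house_alpha)"
      using H1 mult_nonneg_nonneg[OF Sinv_norm_nonneg house_M_nonneg[OF field_degree_pos, of \<sigma> Y]]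
      by (simp add: mult_le_cancel_left1)
    finally show ?thesis by (simp add: mult_ac)
  qed
  ultimately have "max (Max ((\<lambda>k. real_of_int \<bar>x k\<bar>) ` {1..m})) (Max ((\<lambda>k. real_of_int \<bar>y k\<bar>) ` {1..m}))
    \<le> 2 * Sinv_norm * house_alpha * house_M m \<sigma> Y"
    using field_degree_pos by (simp add: Max_le_iff)
  then show ?thesis using max_coordinate_pos[OF Y, of x] by (intro power_mono) auto
qed simp

end

theorem theorem2:
  fixes M :: "complex set" and m n :: nat
    and \<omega> :: "nat \<Rightarrow> complex" and \<sigma> :: "nat \<Rightarrow> complex \<Rightarrow> complex"
    and f :: "complex poly" and \<alpha> :: complex
    and r :: "nat \<Rightarrow> nat \<Rightarrow> complex"
    and Sinv :: "nat \<Rightarrow> nat \<Rightarrow> complex"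
    and \<mu> X Y :: complex and x y :: "nat \<Rightarrow> int"
    and chji :: "nat \<Rightarrow> nat \<Rightarrow> nat \<Rightarrow> real" and chi :: "nat \<Rightarrow> nat \<Rightarrow> real"
    and d :: "nat \<Rightarrow> nat \<Rightarrow> real"
    and c1 c2 c3 c4 c5 A :: real
  assumes M_field: "subfield_C M"
    and basis: "integral_basis M m \<omega>"
    and emb: "all_embeddings M m \<sigma>"
    and f_monic: "lead_coeff f = 1" and f_irr: "irreducible_over M f"
    and f_deg: "degree f = n"
    and f_root: "poly f \<alpha> = 0"
    and \<alpha>_int: "algebraic_int \<alpha>"
    and roots: "\<And>j. j \<in> {1..m} \<Longrightarrow> map_poly (\<sigma> j) f = (\<Prod>k=1..n. [:- r j k, 1:])"
    and Sinv_left: "\<And>i k. i \<in> {1..m} \<Longrightarrow> k \<in> {1..m} \<Longrightarrow>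
          (\<Sum>j=1..m. Sinv i j * \<sigma> j (\<omega> k)) = (if i = k then 1 else 0)"
    and Sinv_right: "\<And>i k. i \<in> {1..m} \<Longrightarrow> k \<in> {1..m} \<Longrightarrow>
          (\<Sum>j=1..m. \<sigma> i (\<omega> j) * Sinv j k) = (if i = k then 1 else 0)"
    and \<mu>_int: "\<mu> \<in> ring_of_integers M" and \<mu>_nz: "\<mu> \<noteq> 0"
    and chji_def: "\<And>h j i. chji h j i = cmod (r h j - r h i) / 2"
    and chi_def: "\<And>h i. chi h i = cmod (\<sigma> h \<mu>) / (\<Prod>j\<in>{1..n} - {i}. chji h j i)"
    and c1_def: "c1 = Max {root n (cmod (\<sigma> h \<mu>)) / chji h j i | h j i.
                     h \<in> {1..m} \<and> i \<in> {1..n} \<and> j \<in> {1..n} \<and> i \<noteq> j}"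
    and c2_def: "c2 = Max ((\<lambda>i. \<Sum>j=1..m. cmod (Sinv i j)) ` {1..m})"
    and c3_def: "c3 = root n (house_M m \<sigma> \<mu>) / Max {cmod (r j k) | j k. j \<in> {1..m} \<and> k \<in> {1..n}}"
    and c4_def: "c4 = max c1 c3"
    and c5_def: "c5 = 2 * c2 * Max {cmod (r j k) | j k. j \<in> {1..m} \<and> k \<in> {1..n}}"
    and d_def: "\<And>h i. d h i = chi h i * c5 ^ (n - 1)"
    and X_repr: "X = (\<Sum>k=1..m. of_int (x k) * \<omega> k)"
    and Y_repr: "Y = (\<Sum>k=1..m. of_int (y k) * \<omega> k)"
    and norm_eq: "rel_norm_lin f X Y = \<mu>"
    and Y_big: "house_M m \<sigma> Y > c4"
    and A_def: "A = max (Max ((\<lambda>k. real_of_int \<bar>x k\<bar>) ` {1..m}))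
                        (Max ((\<lambda>k. real_of_int \<bar>y k\<bar>) ` {1..m}))"
  shows "\<exists>h\<in>{1..m}. \<exists>i\<in>{1..n}. cmod (\<sigma> h X - r h i * \<sigma> h Y) \<le> d h i / A ^ (n - 1)"
proof -
  interpret relative_extension M m \<omega> \<sigma> Sinv f n r
    using M_field basis emb f_monic f_irr f_deg roots Sinv_left
    by unfold_locales (auto simp: all_embeddings_def)
  have XY: "X \<in> M" "Y \<in> M" unfolding X_repr Y_repr by (simp_all only: int_comb_mem)
  have Y_big': "root n (house_M m \<sigma> \<mu>) / house_alpha < house_M m \<sigma> Y"
    using Y_big by (simp add: c4_def c3_def house_alpha_def)
  moreover have "root n (house_M m \<sigma> \<mu>) / house_alpha \<ge> 0"
    by (intro divide_nonneg_nonneg real_root_ge_zero house_M_nonneg[OF field_degree_pos] house_alpha_nonneg)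
  ultimately have Y_pos: "house_M m \<sigma> Y > 0" by linarith
  then have "Y \<noteq> 0" using house_M_zero by auto
  obtain h i where hi: "h \<in> {1..m}" "i \<in> {1..n}" and "cmod (\<sigma> h X - r h i * \<sigma> h Y) \<le>
    cmod (\<sigma> h (rel_norm_lin f X Y)) / (\<Prod>j\<in>{1..n} - {i}. cmod (r h j - r h i) / 2) / house_M m \<sigma> Y ^ (n - 1)"
    by (rule smallest_conjugate_factor[OF XY Y_pos])
  then have small: "cmod (\<sigma> h X - r h i * \<sigma> h Y) \<le> chi h i / house_M m \<sigma> Y ^ (n - 1)"
    by (simp add: chi_def chji_def norm_eq)
  have "A ^ (n - 1) \<le> c5 ^ (n - 1) * house_M m \<sigma> Y ^ (n - 1)"
    using max_coordinate_power_le[OF f_root \<alpha>_int X_repr Y_repr \<open>Y \<noteq> 0\<close>] Y_big' norm_eq A_def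
    by (simp add: c5_def c2_def Sinv_norm_def house_alpha_def power_mult_distrib)
  then have "chi h i / house_M m \<sigma> Y ^ (n - 1) \<le> d h i / A ^ (n - 1)"
    unfolding d_def using max_coordinate_pos[OF Y_repr \<open>Y \<noteq> 0\<close>] A_def Y_pos
    by (intro divide_le_of_le_mult) (auto simp: chi_def chji_def prod_nonneg)
  then show ?thesis using hi order_trans[OF small] by blast
qed

end
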